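(* Let $P_{Y|X}$ be a channel on finite alphabets and $\psi:\mathbb R_+\to\mathbb R_+$ a convex function with $F_I(t,P_{Y|X})\le t-\psi(t)$ for all $t\ge0$. For a finite-valued $W$ and encoder functions $f_j$, let $P_{Y^n|W}(y^n|w)=\prod_{j=1}^nP_{Y|X}(y_j|f_j(w,y^{j-1}))$. Then for all $t\ge0$, $$F_I(t,P_{Y^n|W})\le t-\psi^{(n)}(t),$$ where $\psi^{(1)}=\psi$ and $\psi^{(k+1)}=\psi^{(k)}\circ\psi$.
   Context: For a channel $P_{B|A}$, $F_I(t,P_{B|A})=\sup\{I(U;B): I(U;A)\le t,\ P_{UAB}=P_{UA}P_{B|A}\}$. *)

theory Defs
  imports "HOL-Analysis.Analysis"
begin

definition mutual_info :: "'u set \<Rightarrow> 'v set \<Rightarrow> ('u \<Rightarrow> 'v \<Rightarrow> real) \<Rightarrow> real" where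
  "mutual_info U V p =
     (\<Sum>u\<in>U. \<Sum>v\<in>V. if p u v = 0 then 0
        else p u v * ln (p u v / ((\<Sum>v'\<in>V. p u v') * (\<Sum>u'\<in>U. p u' v))))"

definition channel :: "'a set \<Rightarrow> 'b set \<Rightarrow> ('a \<Rightarrow> 'b \<Rightarrow> real) \<Rightarrow> bool" where
  "channel A B K \<longleftrightarrow> (\<forall>a\<in>A. (\<forall>b\<in>B. 0 \<le> K a b) \<and> (\<Sum>b\<in>B. K a b) = 1)"

text \<open>F_I(t, K) = sup { I(U;B) : I(U;A) \<le> t, P_UAB = P_UA K }, where U ranges over
  an arbitrary finite alphabet, represented as {..<N} for some N.\<close>
definition F_I :: "'a set \<Rightarrow> 'b set \<Rightarrow> ('a \<Rightarrow> 'b \<Rightarrow> real) \<Rightarrow> real \<Rightarrow> real" where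
  "F_I A B K t = Sup {mutual_info {..<N} B (\<lambda>u b. \<Sum>a\<in>A. p u a * K a b) | (N::nat) p.
      (\<forall>u a. 0 \<le> p u a) \<and> (\<Sum>u<N. \<Sum>a\<in>A. p u a) = 1 \<and> mutual_info {..<N} A p \<le> t}"

text \<open>The n-letter channel with feedback encoders f_{j+1}(w, y^j) (0-indexed j).\<close>
definition feedback_channel ::
  "nat \<Rightarrow> ('x \<Rightarrow> 'y \<Rightarrow> real) \<Rightarrow> (nat \<Rightarrow> 'w \<Rightarrow> 'y list \<Rightarrow> 'x) \<Rightarrow> 'w \<Rightarrow> 'y list \<Rightarrow> real" where
  "feedback_channel n K f w ys = (\<Prod>j<n. K (f j w (take j ys)) (ys ! j))"

end

(* Fix an auxiliary U with I(U;W) \<le> t and induct on the block length. By the chain rule,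
   I(U;Y^(m+1)) = I(U;Y^m) + \<Sum>_y P(y) I(U;Y_(m+1) | Y^m = y). Given Y^m = y the new letter is the
   output of K on X = f_m(W, y), so by the definition of F_I and the hypothesis the y-term is at
   most s_y - \<psi>(s_y), where s_y = I(U;X | Y^m = y) \<le> I(U;W | Y^m = y). Since U - W - Y^m is a
   Markov chain, these conditional informations average to I(U;W) - I(U;Y^m) \<le> t - I(U;Y^m).
   Jensen's inequality and the monotonicity of the nonnegative concave map s \<mapsto> s - \<psi>(s)
   give I(U;Y^(m+1)) \<le> t - \<psi>(t - I(U;Y^m)); the induction hypothesis and the monotonicity of
   \<psi> (convex, nonnegative, \<psi>(0) = 0) finish the step. *)

theory Submission
  imports Defs
begin

lemma mutual_info_altdef:
  "mutual_info U V p =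
     (\<Sum>u\<in>U. \<Sum>v\<in>V. p u v * ln (p u v / ((\<Sum>v'\<in>V. p u v') * (\<Sum>u'\<in>U. p u' v))))"
  unfolding mutual_info_def by (intro sum.cong refl) simp

lemma mutual_info_cong:
  assumes "\<And>u v. u \<in> U \<Longrightarrow> v \<in> V \<Longrightarrow> p u v = q u v"
  shows "mutual_info U V p = mutual_info U V q"
  unfolding mutual_info_altdef using assms by (intro sum.cong refl) (auto intro!: sum.cong)

lemma mutual_info_nonneg:
  assumes "finite U" "finite V" "\<And>u v. u \<in> U \<Longrightarrow> v \<in> V \<Longrightarrow> 0 \<le> p u v"
    and "(\<Sum>u\<in>U. \<Sum>v\<in>V. p u v) = 1"
  shows "0 \<le> mutual_info U V p"
proof -
  define a where "a u = (\<Sum>v\<in>V. p u v)" for u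
  define b where "b v = (\<Sum>u\<in>U. p u v)" for v
  have term_ge: "p u v - a u * b v \<le> p u v * ln (p u v / (a u * b v))"
    if uv: "u \<in> U" "v \<in> V" for u v
  proof (cases "p u v = 0")
    case True
    have "0 \<le> a u * b v"
      unfolding a_def b_def using assms uv by (auto intro!: sum_nonneg mult_nonneg_nonneg)
    then show ?thesis using True by simp
  next
    case False
    then have p: "0 < p u v" using assms uv by force
    have "p u v \<le> a u" "p u v \<le> b v"
      unfolding a_def b_def using assms uv by (auto intro!: member_le_sum)
    then have ab: "0 < a u * b v" using p by simp
    have "p u v - a u * b v = p u v * (1 - a u * b v / p u v)"
      using p by (simp add: field_simps)
    also have "\<dots> \<le> p u v * - ln (a u * b v / p u v)"
      using ln_le_minus_one[of "a u * b v / p u v"] ab p by (intro mult_left_mono) auto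
    also have "- ln (a u * b v / p u v) = ln (p u v / (a u * b v))"
      using ab p by (simp add: ln_div)
    finally show ?thesis .
  qed
  have "(\<Sum>u\<in>U. \<Sum>v\<in>V. p u v - a u * b v) = 1 - (\<Sum>u\<in>U. a u) * (\<Sum>v\<in>V. b v)"
    by (simp add: sum_subtractf sum_product assms(4))
  also have "\<dots> = 0" using assms(4) unfolding a_def b_def by (subst (2) sum.swap) simp
  finally have "(\<Sum>u\<in>U. \<Sum>v\<in>V. p u v - a u * b v) = 0" .
  moreover have "(\<Sum>u\<in>U. \<Sum>v\<in>V. p u v - a u * b v) \<le> mutual_info U V p"
    unfolding mutual_info_altdef a_def[symmetric] b_def[symmetric]
    using term_ge by (intro sum_mono) auto
  ultimately show ?thesis by simp
qed

lemma mutual_info_le_card: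
  assumes "finite U" "finite V" "\<And>u v. u \<in> U \<Longrightarrow> v \<in> V \<Longrightarrow> 0 \<le> p u v"
  shows "mutual_info U V p \<le> real (card V)"
proof -
  define a where "a u = (\<Sum>v\<in>V. p u v)" for u
  define b where "b v = (\<Sum>u\<in>U. p u v)" for v
  have term_le: "p u v * ln (p u v / (a u * b v)) \<le> p u v / b v"
    if uv: "u \<in> U" "v \<in> V" for u v
  proof (cases "p u v = 0")
    case False
    then have p: "0 < p u v" using assms uv by force
    have "p u v \<le> a u" "p u v \<le> b v"
      unfolding a_def b_def using assms uv by (auto intro!: member_le_sum)
    then have ab: "0 < a u" "0 < b v" "p u v \<le> a u" using p by auto
    have "ln (p u v / (a u * b v)) \<le> ln (1 / b v)"
      using ab p by (simp add: field_simps)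
    also have "\<dots> \<le> 1 / b v - 1" using ab by (intro ln_le_minus_one) simp
    finally have "p u v * ln (p u v / (a u * b v)) \<le> p u v * (1 / b v - 1)"
      using p by (intro mult_left_mono) auto
    also have "\<dots> \<le> p u v / b v" using p by (simp add: field_simps)
    finally show ?thesis .
  qed simp
  have "mutual_info U V p \<le> (\<Sum>u\<in>U. \<Sum>v\<in>V. p u v / b v)"
    unfolding mutual_info_altdef a_def[symmetric] b_def[symmetric]
    using term_le by (intro sum_mono) auto
  also have "\<dots> = (\<Sum>v\<in>V. b v / b v)"
    by (subst sum.swap) (simp add: b_def sum_divide_distrib[symmetric])
  also have "\<dots> \<le> (\<Sum>v\<in>V. 1)" by (intro sum_mono) simp
  finally show ?thesis by simp
qed

lemma mutual_info_reindex:
  assumes "bij_betw \<phi> V' V"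
  shows "mutual_info U V p = mutual_info U V' (\<lambda>u v. p u (\<phi> v))"
proof -
  have "(\<Sum>v'\<in>V. p u v') = (\<Sum>v\<in>V'. p u (\<phi> v))" for u
    using sum.reindex_bij_betw[OF assms, symmetric] .
  then show ?thesis
    unfolding mutual_info_altdef by (simp add: sum.reindex_bij_betw[OF assms, symmetric])
qed

lemma mutual_info_singleton_left:
  assumes "(\<Sum>v\<in>V. q u v) = 1"
  shows "mutual_info {u} V q = 0"
  unfolding mutual_info_altdef using assms by (auto intro!: sum.neutral)

lemma mutual_info_singleton_right:
  assumes "(\<Sum>u\<in>U. q u v) = 1"
  shows "mutual_info U {v} q = 0"
  unfolding mutual_info_altdef using assms by (auto intro!: sum.neutral)

text \<open>I(U;Z|Y) of a joint pmf of (U,(Y,Z)): the slice at Y = y is renormalised by its mass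
  P(Y = y); slices of mass zero vanish identically, so the junk value x / 0 = 0 is harmless.\<close>
definition cond_mutual_info :: "'u set \<Rightarrow> 'y set \<Rightarrow> 'z set \<Rightarrow> ('u \<Rightarrow> 'y \<times> 'z \<Rightarrow> real) \<Rightarrow> real" where
  "cond_mutual_info U Y Z p =
     (\<Sum>y\<in>Y. (\<Sum>u\<in>U. \<Sum>z\<in>Z. p u (y, z)) *
        mutual_info U Z (\<lambda>u z. p u (y, z) / (\<Sum>u\<in>U. \<Sum>z\<in>Z. p u (y, z))))"

lemma scaled_mutual_info:
  "c * mutual_info U V (\<lambda>u v. q u v / c) =
     (\<Sum>u\<in>U. \<Sum>v\<in>V. q u v * ln (c * q u v / ((\<Sum>v'\<in>V. q u v') * (\<Sum>u'\<in>U. q u' v))))"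
proof (cases "c = 0")
  case False
  have rescale: "(x / c) / ((a / c) * (b / c)) = c * x / (a * b)" for x a b :: real
    using False by (cases "a = 0 \<or> b = 0") (auto simp: field_simps)
  show ?thesis unfolding mutual_info_altdef sum_distrib_left[of c]
    by (intro sum.cong refl)
      (use False in \<open>simp only: sum_divide_distrib[symmetric] rescale, simp\<close>)
qed simp

lemma mutual_info_chain_rule:
  fixes p :: "'u \<Rightarrow> 'y \<times> 'z \<Rightarrow> real"
  assumes "finite U" "finite Y" "finite Z"
    and "\<And>u y z. u \<in> U \<Longrightarrow> y \<in> Y \<Longrightarrow> z \<in> Z \<Longrightarrow> 0 \<le> p u (y, z)"
  shows "mutual_info U (Y \<times> Z) p =
    mutual_info U Y (\<lambda>u y. \<Sum>z\<in>Z. p u (y, z)) + cond_mutual_info U Y Z p"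
proof -
  define pUY where "pUY u y = (\<Sum>z\<in>Z. p u (y, z))" for u y
  define pU where "pU u = (\<Sum>y\<in>Y. pUY u y)" for u
  define P where "P y = (\<Sum>u\<in>U. pUY u y)" for y
  define pYZ where "pYZ y z = (\<Sum>u\<in>U. p u (y, z))" for y z
  have split_ln: "p u (y, z) * ln (p u (y, z) / (pU u * pYZ y z)) =
      p u (y, z) * ln (pUY u y / (pU u * P y)) +
      p u (y, z) * ln (P y * p u (y, z) / (pUY u y * pYZ y z))"
    if "u \<in> U" "y \<in> Y" "z \<in> Z" for u y z
  proof (cases "p u (y, z) = 0")
    case False
    then have p: "0 < p u (y, z)" using assms that by force
    have "p u (y, z) \<le> pUY u y" "pUY u y \<le> pU u" "pUY u y \<le> P y" "p u (y, z) \<le> pYZ y z"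
      unfolding pUY_def pU_def P_def pYZ_def using assms that
      by (auto intro!: member_le_sum sum_nonneg)
    then have "0 < pUY u y" "0 < pU u" "0 < P y" "0 < pYZ y z" using p by linarith+
    then show ?thesis using p by (simp add: ln_div ln_mult flip: distrib_left)
  qed simp
  have "mutual_info U (Y \<times> Z) p =
      (\<Sum>u\<in>U. \<Sum>y\<in>Y. \<Sum>z\<in>Z. p u (y, z) * ln (p u (y, z) / (pU u * pYZ y z)))"
    unfolding mutual_info_altdef sum.cartesian_product' pU_def pUY_def pYZ_def ..
  also have "\<dots> = (\<Sum>u\<in>U. \<Sum>y\<in>Y. \<Sum>z\<in>Z. p u (y, z) * ln (pUY u y / (pU u * P y))) +
      (\<Sum>y\<in>Y. \<Sum>u\<in>U. \<Sum>z\<in>Z. p u (y, z) * ln (P y * p u (y, z) / (pUY u y * pYZ y z)))"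
    by (subst (2) sum.swap) (simp add: split_ln sum.distrib)
  also have "(\<Sum>u\<in>U. \<Sum>y\<in>Y. \<Sum>z\<in>Z. p u (y, z) * ln (pUY u y / (pU u * P y))) =
      mutual_info U Y pUY"
    unfolding mutual_info_altdef pU_def[symmetric] P_def[symmetric]
    by (simp add: pUY_def sum_distrib_right)
  also have "(\<Sum>y\<in>Y. \<Sum>u\<in>U. \<Sum>z\<in>Z. p u (y, z) * ln (P y * p u (y, z) / (pUY u y * pYZ y z))) =
      cond_mutual_info U Y Z p"
    unfolding cond_mutual_info_def scaled_mutual_info
    by (simp add: P_def pUY_def pYZ_def)
  finally show ?thesis by (simp add: pUY_def)
qed

lemma cond_mutual_info_nonneg:
  assumes "finite U" "finite Y" "finite Z"
    and "\<And>u y z. u \<in> U \<Longrightarrow> y \<in> Y \<Longrightarrow> z \<in> Z \<Longrightarrow> 0 \<le> p u (y, z)"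
  shows "0 \<le> cond_mutual_info U Y Z p"
  unfolding cond_mutual_info_def
proof (intro sum_nonneg)
  fix y assume y: "y \<in> Y"
  define P where "P = (\<Sum>u\<in>U. \<Sum>z\<in>Z. p u (y, z))"
  have "0 \<le> P" unfolding P_def using assms y by (auto intro!: sum_nonneg)
  moreover have "0 \<le> mutual_info U Z (\<lambda>u z. p u (y, z) / P)" if "P \<noteq> 0"
  proof (rule mutual_info_nonneg)
    show "(\<Sum>u\<in>U. \<Sum>z\<in>Z. p u (y, z) / P) = 1"
      using that by (simp add: P_def flip: sum_divide_distrib)
  qed (use assms y \<open>0 \<le> P\<close> in auto)
  ultimately show "0 \<le> P * mutual_info U Z (\<lambda>u z. p u (y, z) / P)"
    by (cases "P = 0") auto
qed

lemma mutual_info_markov_extension: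
  assumes "\<And>w. w \<in> W \<Longrightarrow> (\<Sum>a\<in>A. G w a) = 1"
  shows "mutual_info U (A \<times> W) (\<lambda>u (a, w). p u w * G w a) = mutual_info U W p"
proof -
  define pU where "pU u = (\<Sum>w\<in>W. p u w)" for u
  define pW where "pW w = (\<Sum>u\<in>U. p u w)" for w
  have marg_U: "(\<Sum>a\<in>A. \<Sum>w\<in>W. p u w * G w a) = pU u" for u
    unfolding pU_def by (subst sum.swap) (simp add: assms flip: sum_distrib_left)
  have marg_W: "(\<Sum>u'\<in>U. p u' w * G w a) = pW w * G w a" for w a
    by (simp add: pW_def sum_distrib_right)
  have cancel: "p u w * G w a * ln (p u w * G w a / (pU u * (pW w * G w a))) =
      G w a * (p u w * ln (p u w / (pU u * pW w)))" for u w a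
  proof (cases "G w a = 0")
    case False
    then have "p u w * G w a / (pU u * (pW w * G w a)) = p u w / (pU u * pW w)"
      by (simp add: field_simps)
    then show ?thesis by simp
  qed simp
  have "mutual_info U (A \<times> W) (\<lambda>u (a, w). p u w * G w a) =
      (\<Sum>u\<in>U. \<Sum>a\<in>A. \<Sum>w\<in>W. G w a * (p u w * ln (p u w / (pU u * pW w))))"
    unfolding mutual_info_altdef sum.cartesian_product' prod.case marg_U marg_W cancel ..
  also have "\<dots> = (\<Sum>u\<in>U. \<Sum>w\<in>W. p u w * ln (p u w / (pU u * pW w)))"
    by (intro sum.cong refl, subst sum.swap) (simp add: assms flip: sum_distrib_right)
  also have "\<dots> = mutual_info U W p"
    unfolding mutual_info_altdef pU_def pW_def ..
  finally show ?thesis .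
qed

lemma mutual_info_markov_chain_rule:
  assumes "finite U" "finite Y" "finite W"
    and "\<And>u w. u \<in> U \<Longrightarrow> w \<in> W \<Longrightarrow> 0 \<le> p u w"
    and "\<And>w y. w \<in> W \<Longrightarrow> y \<in> Y \<Longrightarrow> 0 \<le> G w y"
    and "\<And>w. w \<in> W \<Longrightarrow> (\<Sum>y\<in>Y. G w y) = 1"
  shows "mutual_info U W p =
    mutual_info U Y (\<lambda>u y. \<Sum>w\<in>W. p u w * G w y) +
    cond_mutual_info U Y W (\<lambda>u (y, w). p u w * G w y)"
proof -
  have "mutual_info U W p = mutual_info U (Y \<times> W) (\<lambda>u (y, w). p u w * G w y)"
    by (rule mutual_info_markov_extension[symmetric]) (rule assms(6))
  also have "\<dots> = mutual_info U Y (\<lambda>u y. \<Sum>w\<in>W. p u w * G w y) +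
      cond_mutual_info U Y W (\<lambda>u (y, w). p u w * G w y)"
    using mutual_info_chain_rule[where p = "\<lambda>u (y, w). p u w * G w y"] assms(1-5) by simp
  finally show ?thesis .
qed

definition map_joint :: "('w \<Rightarrow> 'x) \<Rightarrow> 'w set \<Rightarrow> ('u \<Rightarrow> 'w \<Rightarrow> real) \<Rightarrow> 'u \<Rightarrow> 'x \<Rightarrow> real" where
  "map_joint g W p u x = (\<Sum>w\<in>W. if g w = x then p u w else 0)"

lemma sum_map_joint:
  assumes "finite X" "\<And>w. w \<in> W \<Longrightarrow> g w \<in> X"
  shows "(\<Sum>x\<in>X. map_joint g W p u x) = (\<Sum>w\<in>W. p u w)"
  unfolding map_joint_def using assms by (subst sum.swap) simp

lemma map_joint_nonneg:
  assumes "\<And>w. w \<in> W \<Longrightarrow> 0 \<le> p u w"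
  shows "0 \<le> map_joint g W p u x"
  unfolding map_joint_def using assms by (intro sum_nonneg) auto

lemma mutual_info_map_joint_le:
  assumes "finite U" "finite X" "finite W"
    and "\<And>w. w \<in> W \<Longrightarrow> g w \<in> X"
    and "\<And>u w. u \<in> U \<Longrightarrow> w \<in> W \<Longrightarrow> 0 \<le> p u w"
  shows "mutual_info U X (map_joint g W p) \<le> mutual_info U W p"
proof -
  define G where "G w x = (if g w = x then 1 else 0 :: real)" for w x
  have "map_joint g W p = (\<lambda>u x. \<Sum>w\<in>W. p u w * G w x)"
    by (intro ext) (auto simp: map_joint_def G_def intro!: sum.cong)
  moreover have "mutual_info U W p =
      mutual_info U X (\<lambda>u x. \<Sum>w\<in>W. p u w * G w x) +
      cond_mutual_info U X W (\<lambda>u (x, w). p u w * G w x)"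
    by (rule mutual_info_markov_chain_rule) (use assms in \<open>auto simp: G_def\<close>)
  moreover have "0 \<le> cond_mutual_info U X W (\<lambda>u (x, w). p u w * G w x)"
    by (rule cond_mutual_info_nonneg) (use assms in \<open>auto simp: G_def\<close>)
  ultimately show ?thesis by simp
qed


abbreviation F_I_values :: "'a set \<Rightarrow> 'b set \<Rightarrow> ('a \<Rightarrow> 'b \<Rightarrow> real) \<Rightarrow> real \<Rightarrow> real set" where
  "F_I_values A B K t \<equiv> {mutual_info {..<N} B (\<lambda>u b. \<Sum>a\<in>A. p u a * K a b) | (N::nat) p.
      (\<forall>u a. 0 \<le> p u a) \<and> (\<Sum>u<N. \<Sum>a\<in>A. p u a) = 1 \<and> mutual_info {..<N} A p \<le> t}"

lemma F_I_valuesI: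
  fixes N :: nat
  assumes "\<forall>u a. 0 \<le> p u a" "(\<Sum>u<N. \<Sum>a\<in>A. p u a) = 1" "mutual_info {..<N} A p \<le> t"
  shows "mutual_info {..<N} B (\<lambda>u b. \<Sum>a\<in>A. p u a * K a b) \<in> F_I_values A B K t"
  using assms by blast

lemma F_I_values_bdd_above:
  assumes "channel A B K" "finite B"
  shows "bdd_above (F_I_values A B K t)"
proof (rule bdd_aboveI)
  fix x assume "x \<in> F_I_values A B K t"
  then obtain N :: nat and p where "x = mutual_info {..<N} B (\<lambda>u b. \<Sum>a\<in>A. p u a * K a b)"
    and "\<forall>u a. 0 \<le> p u a" by blast
  then show "x \<le> real (card B)"
    using assms by (auto intro!: mutual_info_le_card sum_nonneg simp: channel_def)
qed

lemma mutual_info_le_F_I: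
  fixes N :: nat
  assumes "channel A B K" "finite B"
    and "\<forall>u a. 0 \<le> p u a" "(\<Sum>u<N. \<Sum>a\<in>A. p u a) = 1" "mutual_info {..<N} A p \<le> t"
  shows "mutual_info {..<N} B (\<lambda>u b. \<Sum>a\<in>A. p u a * K a b) \<le> F_I A B K t"
  unfolding F_I_def using F_I_values_bdd_above[OF assms(1,2)] F_I_valuesI[OF assms(3-5)]
  by (rule cSup_upper[rotated])

lemma F_I_values_nonempty:
  assumes "finite A" "A \<noteq> {}" "0 \<le> t"
  shows "F_I_values A B K t \<noteq> {}"
proof -
  obtain a where a: "a \<in> A" using assms(2) by blast
  define \<delta> where "\<delta> = (\<lambda>(u::nat) b. if b = a then 1 else 0 :: real)"
  have "mutual_info {0} A \<delta> = 0"
    by (rule mutual_info_singleton_left) (use assms(1) a in \<open>simp add: \<delta>_def\<close>)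
  then have "mutual_info {..<1} B (\<lambda>u b. \<Sum>a'\<in>A. \<delta> u a' * K a' b) \<in> F_I_values A B K t"
    using assms(1,3) a by (intro F_I_valuesI) (simp_all add: \<delta>_def lessThan_Suc)
  then show ?thesis by blast
qed

lemma mutual_info_channel_output_nonneg:
  fixes N :: nat
  assumes "channel A B K" "finite A" "finite B"
    and "\<forall>u a. 0 \<le> p u a" "(\<Sum>u<N. \<Sum>a\<in>A. p u a) = 1"
  shows "0 \<le> mutual_info {..<N} B (\<lambda>u b. \<Sum>a\<in>A. p u a * K a b)"
proof (rule mutual_info_nonneg)
  have "(\<Sum>u<N. \<Sum>b\<in>B. \<Sum>a\<in>A. p u a * K a b) = (\<Sum>u<N. \<Sum>a\<in>A. p u a * (\<Sum>b\<in>B. K a b))"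
    by (intro sum.cong refl) (simp add: sum_distrib_left sum.swap[of _ B])
  then show "(\<Sum>u\<in>{..<N}. \<Sum>b\<in>B. \<Sum>a\<in>A. p u a * K a b) = 1"
    using assms(1,5) by (simp add: channel_def)
qed (use assms in \<open>auto intro!: sum_nonneg simp: channel_def\<close>)

lemma F_I_nonneg:
  assumes "channel A B K" "finite A" "finite B" "A \<noteq> {}" "0 \<le> t"
  shows "0 \<le> F_I A B K t"
proof -
  obtain x where x: "x \<in> F_I_values A B K t"
    using F_I_values_nonempty[OF assms(2,4,5)] by blast
  then have "0 \<le> x"
    using assms(1-3) by (auto intro: mutual_info_channel_output_nonneg)
  then show ?thesis
    unfolding F_I_def by (rule cSup_upper2[OF x _ F_I_values_bdd_above[OF assms(1,3)]])
qed

lemma F_I_le: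
  assumes "finite A" "A \<noteq> {}" "0 \<le> t"
    and "\<And>(N::nat) p. \<forall>u a. 0 \<le> p u a \<Longrightarrow> (\<Sum>u<N. \<Sum>a\<in>A. p u a) = 1 \<Longrightarrow>
      mutual_info {..<N} A p \<le> t \<Longrightarrow> mutual_info {..<N} B (\<lambda>u b. \<Sum>a\<in>A. p u a * K a b) \<le> c"
  shows "F_I A B K t \<le> c"
  unfolding F_I_def using F_I_values_nonempty[OF assms(1-3)]
  by (rule cSup_least) (use assms(4) in blast)

lemma mutual_info_channel_output_le_F_I:
  fixes N :: nat
  assumes "channel A B K" "finite A" "finite B" "finite W" "\<And>w. w \<in> W \<Longrightarrow> g w \<in> A"
    and "\<forall>u w. 0 \<le> q u w" "(\<Sum>u<N. \<Sum>w\<in>W. q u w) = 1"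
  shows "mutual_info {..<N} B (\<lambda>u b. \<Sum>w\<in>W. q u w * K (g w) b)
    \<le> F_I A B K (mutual_info {..<N} A (map_joint g W q))"
proof -
  have "(\<Sum>a\<in>A. map_joint g W q u a * K a b) = (\<Sum>w\<in>W. q u w * K (g w) b)" for u b
  proof -
    have "(\<Sum>a\<in>A. map_joint g W q u a * K a b) =
        (\<Sum>w\<in>W. \<Sum>a\<in>A. if g w = a then q u w * K (g w) b else 0)"
      unfolding map_joint_def sum_distrib_right by (subst sum.swap) (intro sum.cong refl; simp)
    also have "\<dots> = (\<Sum>w\<in>W. q u w * K (g w) b)" using assms(2,5) by simp
    finally show ?thesis .
  qed
  then have "(\<lambda>u b. \<Sum>w\<in>W. q u w * K (g w) b) = (\<lambda>u b. \<Sum>a\<in>A. map_joint g W q u a * K a b)"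
    by simp
  moreover have "mutual_info {..<N} B (\<lambda>u b. \<Sum>a\<in>A. map_joint g W q u a * K a b)
      \<le> F_I A B K (mutual_info {..<N} A (map_joint g W q))"
    using assms by (intro mutual_info_le_F_I) (auto intro: map_joint_nonneg simp: sum_map_joint)
  ultimately show ?thesis by simp
qed

lemma convex_on_nonneg_zero_imp_mono_on:
  fixes \<psi> :: "real \<Rightarrow> real"
  assumes "convex_on {0..} \<psi>" "\<psi> 0 = 0" "\<And>s. 0 \<le> s \<Longrightarrow> 0 \<le> \<psi> s"
  shows "mono_on {0..} \<psi>"
proof (rule mono_onI)
  fix a b :: real assume ab: "a \<in> {0..}" "b \<in> {0..}" "a \<le> b"
  show "\<psi> a \<le> \<psi> b"
  proof (cases "b = 0")
    case False
    then have b: "0 < b" using ab by simp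
    have "\<psi> ((1 - a / b) *\<^sub>R 0 + (a / b) *\<^sub>R b) \<le> (1 - a / b) * \<psi> 0 + (a / b) * \<psi> b"
      using ab b by (intro convex_onD[OF assms(1)]) auto
    moreover have "(a / b) * \<psi> b \<le> \<psi> b"
      using ab b assms(3) by (intro mult_left_le_one_le) auto
    ultimately show ?thesis using b assms(2) by simp
  qed (use ab in simp)
qed

lemma concave_on_nonneg_imp_mono_on:
  fixes h :: "real \<Rightarrow> real"
  assumes concave: "concave_on {0..} h" and nonneg: "\<And>s. 0 \<le> s \<Longrightarrow> 0 \<le> h s"
  shows "mono_on {0..} h"
proof (rule mono_onI, rule ccontr)
  fix a b :: real assume ab: "a \<in> {0..}" "b \<in> {0..}" "a \<le> b" and "\<not> h a \<le> h b"
  then have lt: "h b < h a" and hb: "0 \<le> h b" using nonneg by auto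
  define \<theta> where "\<theta> = (h b / h a + 1) / 2"
  have \<theta>: "0 < \<theta>" "\<theta> < 1" "h b < \<theta> * h a"
    using lt hb unfolding \<theta>_def by (auto simp: field_simps)
  \<comment> \<open>Write b as the combination of a (weight \<theta>) and some c \<ge> b; concavity gives h b \<ge> \<theta> h a.\<close>
  define c where "c = (b - \<theta> * a) / (1 - \<theta>)"
  have "b \<le> c" using \<theta> ab unfolding c_def by (simp add: field_simps mult_left_mono)
  have b: "(1 - (1 - \<theta>)) *\<^sub>R a + (1 - \<theta>) *\<^sub>R c = b" using \<theta> unfolding c_def by simp
  have "(1 - (1 - \<theta>)) * h a + (1 - \<theta>) * h c \<le> h b"
    using concave_onD[OF concave, of "1 - \<theta>" a c] \<theta> ab \<open>b \<le> c\<close> unfolding b by auto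
  moreover have "0 \<le> (1 - \<theta>) * h c" using \<theta> nonneg ab \<open>b \<le> c\<close> by simp
  ultimately show False using \<theta> by simp
qed

lemma sum_weighted_diff_convex_le:
  fixes \<psi> :: "real \<Rightarrow> real"
  assumes "finite Y" "\<And>y. y \<in> Y \<Longrightarrow> 0 \<le> P y" "(\<Sum>y\<in>Y. P y) = 1"
    and "\<And>y. y \<in> Y \<Longrightarrow> 0 \<le> s y" "(\<Sum>y\<in>Y. P y * s y) \<le> c"
    and "convex_on {0..} \<psi>" "mono_on {0..} (\<lambda>s. s - \<psi> s)"
  shows "(\<Sum>y\<in>Y. P y * (s y - \<psi> (s y))) \<le> c - \<psi> c"
proof -
  define m where "m = (\<Sum>y\<in>Y. P y * s y)"
  have "Y \<noteq> {}" using assms(3) by auto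
  have "0 \<le> m" unfolding m_def using assms(2,4) by (auto intro!: sum_nonneg)
  have "(\<Sum>y\<in>Y. P y * (s y - \<psi> (s y))) = m - (\<Sum>y\<in>Y. P y * \<psi> (s y))"
    unfolding m_def by (simp add: right_diff_distrib sum_subtractf)
  also have "\<dots> \<le> m - \<psi> m"
    using convex_on_sum[OF assms(1) \<open>Y \<noteq> {}\<close> assms(6) assms(3), of s] assms(2,4)
    unfolding m_def by simp
  also have "\<dots> \<le> c - \<psi> c"
    using \<open>0 \<le> m\<close> assms(5) unfolding m_def by (intro mono_onD[OF assms(7)]) auto
  finally show ?thesis .
qed

lemma diff_mono_on_if_F_I_le:
  fixes K :: "'x::finite \<Rightarrow> 'z::finite \<Rightarrow> real" and \<psi> :: "real \<Rightarrow> real"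
  assumes "channel UNIV UNIV K" "convex_on {0..} \<psi>"
    and "\<And>s. 0 \<le> s \<Longrightarrow> F_I UNIV UNIV K s \<le> s - \<psi> s"
  shows "mono_on {0..} (\<lambda>s. s - \<psi> s)"
proof (rule concave_on_nonneg_imp_mono_on)
  show "concave_on {0..} (\<lambda>s. s - \<psi> s)"
    using assms(2) by (intro concave_on_diff) (auto simp: concave_on_ident)
  show "0 \<le> s - \<psi> s" if "0 \<le> s" for s
    using F_I_nonneg[OF assms(1) _ _ _ that] assms(3)[OF that] by simp
qed

text \<open>One use of K after a past output y \<in> Y: W produced y with probability G w y, then
  the encoder sends g w y. The auxiliary U is jointly distributed with W according to p.\<close>
locale feedback_letter =
  fixes N :: nat and p :: "nat \<Rightarrow> 'w::finite \<Rightarrow> real"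
    and Y :: "'l set" and G :: "'w \<Rightarrow> 'l \<Rightarrow> real"
    and K :: "'x::finite \<Rightarrow> 'z::finite \<Rightarrow> real" and g :: "'w \<Rightarrow> 'l \<Rightarrow> 'x"
  assumes finite_Y: "finite Y"
    and channel_K: "channel UNIV UNIV K" and channel_G: "channel UNIV Y G"
    and p_nonneg: "\<forall>u w. 0 \<le> p u w" and sum_p: "(\<Sum>u<N. \<Sum>w\<in>UNIV. p u w) = 1"
begin

definition past_mass :: "'l \<Rightarrow> real" where
  "past_mass y = (\<Sum>u<N. \<Sum>w\<in>UNIV. p u w * G w y)"

text \<open>The joint pmf of (U, W) given the past output y, and I(U; X | past output y).\<close>
definition cond_input :: "'l \<Rightarrow> nat \<Rightarrow> 'w \<Rightarrow> real" where
  "cond_input y u w = p u w * G w y / past_mass y"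

definition cond_letter_info :: "'l \<Rightarrow> real" where
  "cond_letter_info y = mutual_info {..<N} UNIV (map_joint (\<lambda>w. g w y) UNIV (cond_input y))"

lemma G_nonneg: "y \<in> Y \<Longrightarrow> 0 \<le> G w y" and sum_G: "(\<Sum>y\<in>Y. G w y) = 1"
  using channel_G by (auto simp: channel_def)

lemma K_nonneg: "0 \<le> K x z" and sum_K: "(\<Sum>z\<in>UNIV. K x z) = 1"
  using channel_K by (auto simp: channel_def)

lemma past_mass_nonneg: "y \<in> Y \<Longrightarrow> 0 \<le> past_mass y"
  unfolding past_mass_def using p_nonneg G_nonneg by (auto intro!: sum_nonneg)

lemma sum_past_mass: "(\<Sum>y\<in>Y. past_mass y) = 1"
proof -
  have "(\<Sum>y\<in>Y. past_mass y) = (\<Sum>u<N. \<Sum>w\<in>UNIV. \<Sum>y\<in>Y. p u w * G w y)"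
    unfolding past_mass_def by (subst sum.swap, rule sum.cong[OF refl], rule sum.swap)
  then show ?thesis using sum_p by (simp add: sum_G flip: sum_distrib_left)
qed

lemma cond_input_nonneg: "y \<in> Y \<Longrightarrow> 0 \<le> cond_input y u w"
  unfolding cond_input_def using p_nonneg G_nonneg past_mass_nonneg by simp

lemma sum_cond_input: "past_mass y \<noteq> 0 \<Longrightarrow> (\<Sum>u<N. \<Sum>w\<in>UNIV. cond_input y u w) = 1"
  by (simp add: cond_input_def past_mass_def flip: sum_divide_distrib)

lemma cond_letter_info_nonneg:
  assumes "y \<in> Y"
  shows "0 \<le> cond_letter_info y"
proof (cases "past_mass y = 0")
  case True
  then have "cond_input y = (\<lambda>u w. 0)" by (simp add: cond_input_def fun_eq_iff)
  then show ?thesis by (simp add: cond_letter_info_def map_joint_def mutual_info_altdef)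
next
  case False
  then show ?thesis unfolding cond_letter_info_def using cond_input_nonneg[OF assms] sum_cond_input
    by (intro mutual_info_nonneg) (auto simp: sum_map_joint map_joint_nonneg)
qed

lemma sum_cond_letter_info_le:
  "(\<Sum>y\<in>Y. past_mass y * cond_letter_info y) \<le>
    mutual_info {..<N} UNIV p - mutual_info {..<N} Y (\<lambda>u y. \<Sum>w\<in>UNIV. p u w * G w y)"
proof -
  have "(\<Sum>y\<in>Y. past_mass y * cond_letter_info y) \<le>
      cond_mutual_info {..<N} Y UNIV (\<lambda>u (y, w). p u w * G w y)"
    unfolding cond_mutual_info_def prod.case
  proof (intro sum_mono)
    fix y assume y: "y \<in> Y"
    have "cond_letter_info y \<le> mutual_info {..<N} UNIV (cond_input y)"
      unfolding cond_letter_info_def using cond_input_nonneg[OF y]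
      by (intro mutual_info_map_joint_le) auto
    then show "past_mass y * cond_letter_info y \<le> (\<Sum>u<N. \<Sum>w\<in>UNIV. p u w * G w y) *
        mutual_info {..<N} UNIV (\<lambda>u w. p u w * G w y / (\<Sum>u<N. \<Sum>w\<in>UNIV. p u w * G w y))"
      using past_mass_nonneg[OF y]
      by (auto simp: past_mass_def[symmetric] cond_input_def[abs_def] intro: mult_left_mono)
  qed
  also have "\<dots> = mutual_info {..<N} UNIV p - mutual_info {..<N} Y (\<lambda>u y. \<Sum>w\<in>UNIV. p u w * G w y)"
    using mutual_info_markov_chain_rule[of "{..<N}" Y UNIV p G] finite_Y p_nonneg G_nonneg sum_G
    by simp
  finally show ?thesis .
qed

lemma cond_mutual_info_output_le:
  fixes \<psi> :: "real \<Rightarrow> real"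
  assumes FI: "\<And>s. 0 \<le> s \<Longrightarrow> F_I UNIV UNIV K s \<le> s - \<psi> s"
  shows "cond_mutual_info {..<N} Y UNIV (\<lambda>u (y, z). \<Sum>w\<in>UNIV. p u w * G w y * K (g w y) z)
    \<le> (\<Sum>y\<in>Y. past_mass y * (cond_letter_info y - \<psi> (cond_letter_info y)))"
  unfolding cond_mutual_info_def prod.case
proof (intro sum_mono)
  fix y assume y: "y \<in> Y"
  define s where "s = cond_letter_info y"
  have mass: "(\<Sum>u<N. \<Sum>z\<in>UNIV. \<Sum>w\<in>UNIV. p u w * G w y * K (g w y) z) = past_mass y"
    by (simp add: past_mass_def sum_K sum.swap[of _ UNIV] flip: sum_distrib_left)
  have slice: "(\<lambda>u z. (\<Sum>w\<in>UNIV. p u w * G w y * K (g w y) z) / past_mass y) =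
      (\<lambda>u z. \<Sum>w\<in>UNIV. cond_input y u w * K (g w y) z)"
    by (simp add: cond_input_def sum_divide_distrib)
  have "mutual_info {..<N} UNIV (\<lambda>u z. \<Sum>w\<in>UNIV. cond_input y u w * K (g w y) z) \<le> s - \<psi> s"
    if "past_mass y \<noteq> 0"
  proof -
    have "mutual_info {..<N} UNIV (\<lambda>u z. \<Sum>w\<in>UNIV. cond_input y u w * K (g w y) z)
        \<le> F_I UNIV UNIV K s"
      unfolding s_def cond_letter_info_def using cond_input_nonneg[OF y] sum_cond_input[OF that]
      by (intro mutual_info_channel_output_le_F_I channel_K) auto
    also have "\<dots> \<le> s - \<psi> s" using FI cond_letter_info_nonneg[OF y] by (simp add: s_def)
    finally show ?thesis .
  qed
  then show "(\<Sum>u<N. \<Sum>z\<in>UNIV. \<Sum>w\<in>UNIV. p u w * G w y * K (g w y) z) *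
      mutual_info {..<N} UNIV (\<lambda>u z. (\<Sum>w\<in>UNIV. p u w * G w y * K (g w y) z) /
        (\<Sum>u<N. \<Sum>z\<in>UNIV. \<Sum>w\<in>UNIV. p u w * G w y * K (g w y) z))
      \<le> past_mass y * (s - \<psi> s)"
    unfolding mass slice using past_mass_nonneg[OF y]
    by (cases "past_mass y = 0") (auto intro: mult_left_mono)
qed

theorem mutual_info_output_le:
  fixes \<psi> :: "real \<Rightarrow> real"
  assumes "mutual_info {..<N} UNIV p \<le> t" and "convex_on {0..} \<psi>"
    and FI: "\<And>s. 0 \<le> s \<Longrightarrow> F_I UNIV UNIV K s \<le> s - \<psi> s"
  shows "mutual_info {..<N} (Y \<times> UNIV) (\<lambda>u (y, z). \<Sum>w\<in>UNIV. p u w * G w y * K (g w y) z)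
    \<le> t - \<psi> (t - mutual_info {..<N} Y (\<lambda>u y. \<Sum>w\<in>UNIV. p u w * G w y))"
proof -
  define r where "r = mutual_info {..<N} Y (\<lambda>u y. \<Sum>w\<in>UNIV. p u w * G w y)"
  have "mutual_info {..<N} (Y \<times> UNIV) (\<lambda>u (y, z). \<Sum>w\<in>UNIV. p u w * G w y * K (g w y) z) =
      r + cond_mutual_info {..<N} Y UNIV (\<lambda>u (y, z). \<Sum>w\<in>UNIV. p u w * G w y * K (g w y) z)"
    using mutual_info_chain_rule[of "{..<N}" Y UNIV
        "\<lambda>u (y, z). \<Sum>w\<in>UNIV. p u w * G w y * K (g w y) z"] finite_Y p_nonneg G_nonneg K_nonneg
    by (simp add: r_def sum_nonneg sum_K sum.swap[of _ UNIV] flip: sum_distrib_left)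
  also have "\<dots> \<le> r + (\<Sum>y\<in>Y. past_mass y * (cond_letter_info y - \<psi> (cond_letter_info y)))"
    using cond_mutual_info_output_le[OF FI] by simp
  also have "\<dots> \<le> r + ((t - r) - \<psi> (t - r))"
  proof (intro add_left_mono sum_weighted_diff_convex_le)
    show "(\<Sum>y\<in>Y. past_mass y * cond_letter_info y) \<le> t - r"
      using sum_cond_letter_info_le assms(1) by (simp add: r_def)
    show "mono_on {0..} (\<lambda>s. s - \<psi> s)"
      using channel_K assms(2) FI by (rule diff_mono_on_if_F_I_le)
  qed (use finite_Y past_mass_nonneg sum_past_mass cond_letter_info_nonneg assms(2) in auto)
  finally show ?thesis by (simp add: r_def)
qed

end

lemma bij_betw_snoc:
  "bij_betw (\<lambda>(ys, y). ys @ [y]) ({ys. length ys = m} \<times> UNIV) {ys. length ys = Suc m}"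
proof (rule bij_betwI[where g = "\<lambda>ys. (butlast ys, last ys)"])
  show "(\<lambda>ys. (butlast ys, last ys)) \<in> {ys. length ys = Suc m} \<rightarrow> {ys. length ys = m} \<times> UNIV"
    by auto
  show "(\<lambda>(ys, y). ys @ [y]) (butlast ys, last ys) = ys" if "ys \<in> {ys. length ys = Suc m}" for ys
    using that by (cases ys rule: rev_cases) auto
qed auto

lemma feedback_channel_snoc:
  assumes "length ys = m"
  shows "feedback_channel (Suc m) K f w (ys @ [y]) = feedback_channel m K f w ys * K (f m w ys) y"
proof -
  have "(\<Prod>j<m. K (f j w (take j (ys @ [y]))) ((ys @ [y]) ! j)) =
      (\<Prod>j<m. K (f j w (take j ys)) (ys ! j))"
    using assms by (intro prod.cong refl) (simp add: nth_append)
  then show ?thesis unfolding feedback_channel_def using assms by (simp add: nth_append)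
qed

lemma channel_feedback_channel:
  fixes K :: "'x \<Rightarrow> 'y::finite \<Rightarrow> real"
  assumes "channel UNIV UNIV K"
  shows "channel UNIV {ys. length ys = m} (feedback_channel m K f)"
proof -
  have K_nonneg: "\<And>x y. 0 \<le> K x y" and sum_K: "\<And>x. (\<Sum>y\<in>UNIV. K x y) = 1"
    using assms by (auto simp: channel_def)
  have "(\<Sum>ys\<in>{ys. length ys = m}. feedback_channel m K f w ys) = 1" for w
  proof (induction m)
    case 0
    have "{ys :: 'y list. length ys = 0} = {[]}" by auto
    then show ?case by (simp add: feedback_channel_def)
  next
    case (Suc m)
    have "(\<Sum>ys\<in>{ys. length ys = Suc m}. feedback_channel (Suc m) K f w ys) =
        (\<Sum>ys\<in>{ys. length ys = m}. \<Sum>y\<in>UNIV. feedback_channel m K f w ys * K (f m w ys) y)"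
      by (simp add: sum.reindex_bij_betw[OF bij_betw_snoc, symmetric] sum.cartesian_product'
          feedback_channel_snoc)
    then show ?case using Suc by (simp add: sum_K flip: sum_distrib_left)
  qed
  moreover have "0 \<le> feedback_channel m K f w ys" for w ys
    unfolding feedback_channel_def using K_nonneg by (intro prod_nonneg) auto
  ultimately show ?thesis by (simp add: channel_def)
qed

lemma mutual_info_feedback_le:
  fixes K :: "'x::finite \<Rightarrow> 'y::finite \<Rightarrow> real" and \<psi> :: "real \<Rightarrow> real"
    and f :: "nat \<Rightarrow> 'w::finite \<Rightarrow> 'y list \<Rightarrow> 'x" and p :: "nat \<Rightarrow> 'w \<Rightarrow> real" and N :: nat
  assumes chan: "channel UNIV UNIV K" and cvx: "convex_on {0..} \<psi>" and nn: "\<forall>t\<ge>0. \<psi> t \<ge> 0"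
    and FI: "\<forall>t\<ge>0. F_I UNIV UNIV K t \<le> t - \<psi> t" and "0 \<le> t"
    and p0: "\<forall>u w. 0 \<le> p u w" and p1: "(\<Sum>u<N. \<Sum>w\<in>UNIV. p u w) = 1"
    and pt: "mutual_info {..<N} UNIV p \<le> t"
  shows "mutual_info {..<N} {ys. length ys = m}
      (\<lambda>u ys. \<Sum>w\<in>UNIV. p u w * feedback_channel m K f w ys) \<le> t - (\<psi> ^^ m) t"
proof -
  have "\<psi> 0 = 0" using F_I_nonneg[OF chan, of 0] nn FI by force
  then have \<psi>_mono: "mono_on {0..} \<psi>"
    using cvx nn by (intro convex_on_nonneg_zero_imp_mono_on) auto
  show ?thesis
  proof (induction m)
    case 0
    have "{ys :: 'y list. length ys = 0} = {[]}" by auto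
    moreover have
      "mutual_info {..<N} {[]} (\<lambda>u ys. \<Sum>w\<in>UNIV. p u w * feedback_channel 0 K f w ys) = 0"
      by (rule mutual_info_singleton_right) (simp add: feedback_channel_def p1)
    ultimately show ?case by simp
  next
    case (Suc m)
    define r where "r = mutual_info {..<N} {ys. length ys = m}
      (\<lambda>u ys. \<Sum>w\<in>UNIV. p u w * feedback_channel m K f w ys)"
    have "(\<psi> ^^ m) t \<ge> 0" using nn \<open>0 \<le> t\<close> by (induction m) auto
    have "mutual_info {..<N} {ys. length ys = Suc m}
        (\<lambda>u ys. \<Sum>w\<in>UNIV. p u w * feedback_channel (Suc m) K f w ys) =
      mutual_info {..<N} ({ys. length ys = m} \<times> UNIV)
        (\<lambda>u (ys, y). \<Sum>w\<in>UNIV. p u w * feedback_channel m K f w ys * K (f m w ys) y)"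
      by (subst mutual_info_reindex[OF bij_betw_snoc], rule mutual_info_cong)
        (auto simp: feedback_channel_snoc mult.assoc)
    also have "\<dots> \<le> t - \<psi> (t - r)"
    proof -
      interpret feedback_letter N p "{ys. length ys = m}" "feedback_channel m K f" K "f m"
        using finite_lists_length_eq[of "UNIV :: 'y set" m] chan channel_feedback_channel[OF chan]
          p0 p1
        by unfold_locales auto
      show ?thesis unfolding r_def using pt cvx FI by (intro mutual_info_output_le) auto
    qed
    also have "\<dots> \<le> t - (\<psi> ^^ Suc m) t"
      using Suc.IH \<open>(\<psi> ^^ m) t \<ge> 0\<close> unfolding r_def[symmetric]
      by (auto intro: mono_onD[OF \<psi>_mono])
    finally show ?case .
  qed
qed

theorem corollary5:
  fixes K :: "'x::finite \<Rightarrow> 'y::finite \<Rightarrow> real"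
    and \<psi> :: "real \<Rightarrow> real"
    and f :: "nat \<Rightarrow> 'w::finite \<Rightarrow> 'y list \<Rightarrow> 'x"
    and n :: nat
  assumes "channel UNIV UNIV K"
    and "convex_on {0..} \<psi>"
    and "\<forall>t\<ge>0. \<psi> t \<ge> 0"
    and "\<forall>t\<ge>0. F_I UNIV UNIV K t \<le> t - \<psi> t"
    and "n \<ge> 1"
  shows "\<forall>t\<ge>0. F_I (UNIV :: 'w set) {ys. length ys = n} (feedback_channel n K f) t
           \<le> t - (\<psi> ^^ n) t"
proof (intro allI impI)
  fix t :: real assume "0 \<le> t"
  then show "F_I (UNIV :: 'w set) {ys. length ys = n} (feedback_channel n K f) t \<le> t - (\<psi> ^^ n) t"
    by (intro F_I_le) (auto intro: mutual_info_feedback_le[OF assms(1-4)])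
qed

end
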